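(* Let $\alpha\in(0,1]$, let $\mathcal{L}$ be the jump uncertainty set in the context, and let $\{Z_i\}$ be an i.i.d. sequence of $\mathbb{R}^d$-valued random variables on a sublinear expectation space $(\Omega,\mathcal{H},\hat{\mathbb{E}})$ with $\hat{\mathbb{E}}[|Z_i|]=\infty$ and $S_n=\sum_{i=1}^nZ_i$, satisfying: (A1) there is $0<\delta<\alpha$ with $M_\delta:=\sup_n\hat{\mathbb{E}}[|n^{-1/\alpha}S_n|^\delta]<\infty$; (A2) there is a function $l$ on $[0,1]$ with $l(s)\to0$ as $s\to0$ such that for each $\varphi\in C_b^3(\mathbb{R}^d)$, $\frac1s\big|\hat{\mathbb{E}}[\varphi(x+s^{1/\alpha}Z_1)-\varphi(x)]-s\sup_{F_\mu\in\mathcal{L}}\int\delta^\alpha_\lambda\varphi(x)F_\mu(d\lambda)\big|\le l(s)$ for all $x\in\mathbb{R}^d$. Then for $\varphi\in C_b^3(\mathbb{R}^d)$ and $s\in[0,1]$, $$\lim_{n\to\infty}\Big|\hat{\mathbb{E}}\big[\varphi(x+(s/n)^{1/\alpha}S_n)\big]-\varphi(x)-s\sup_{F_\mu\in\mathcal{L}}\int_{\mathbb{R}^d}\delta^\alpha_\lambda\varphi(x)F_\mu(d\lambda)\Big|=o(s)$$ uniformly in $x\in\mathbb{R}^d$, where $o(s)/s\to0$ as $s\to0$.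
   Context: Sublinear expectation space: $\hat{\mathbb{E}}$ monotone, constant preserving, sub-additive, positively homogeneous on a space $\mathcal{H}$ closed under composition with bounded Lipschitz functions; random variables need only have $\varphi(X)\in\mathcal{H}$ for bounded Lipschitz $\varphi$. I.i.d.: $Z_{i+1}\overset{d}{=}Z_i$ and $Z_{i+1}$ independent from $(Z_1,\dots,Z_i)$, with independence meaning $\hat{\mathbb{E}}[\varphi(X,Y)]=\hat{\mathbb{E}}[\hat{\mathbb{E}}[\varphi(x,Y)]_{x=X}]$. $F_\mu(B)=\int_S\mu(dz)\int_0^\infty\mathbb{1}_B(rz)r^{-1-\alpha}dr$ for a symmetric finite measure $\mu$ on the unit sphere $S$, and $\mathcal{L}=\{F_\mu:\mu(S)\in(\underline{\Lambda},\overline{\Lambda})\}$ for given $\underline{\Lambda},\overline{\Lambda}>0$. $\delta^\alpha_\lambda\varphi(x)=\varphi(x+\lambda)-\varphi(x)-\langle D\varphi(x),\lambda\mathbb{1}_{\{|\lambda|\le1\}}\rangle$ if $\alpha=1$, $=\varphi(x+\lambda)-\varphi(x)$ if $\alpha\in(0,1)$. $C_b^3$: uniformly bounded derivatives up to order 3. *)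

theory Defs
  imports "HOL-Analysis.Analysis"
begin

definition bl_fun :: "('a::metric_space \<Rightarrow> real) \<Rightarrow> bool" where
  "bl_fun \<phi> \<longleftrightarrow> bounded (range \<phi>) \<and> (\<exists>C. C-lipschitz_on UNIV \<phi>)"

definition bl_tuple :: "nat \<Rightarrow> ((nat \<Rightarrow> 'a::metric_space) \<Rightarrow> real) \<Rightarrow> bool" where
  "bl_tuple n \<phi> \<longleftrightarrow> bounded (range \<phi>) \<and>
     (\<exists>C. \<forall>x y. \<bar>\<phi> x - \<phi> y\<bar> \<le> C * (\<Sum>k<n. dist (x k) (y k)))"

definition bl_tuple2 :: "nat \<Rightarrow> ((nat \<Rightarrow> 'a::metric_space) \<Rightarrow> 'a \<Rightarrow> real) \<Rightarrow> bool" where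
  "bl_tuple2 n \<phi> \<longleftrightarrow> bounded (range (case_prod \<phi>)) \<and>
     (\<exists>C. \<forall>x y x' y'. \<bar>\<phi> x y - \<phi> x' y'\<bar> \<le> C * ((\<Sum>k<n. dist (x k) (x' k)) + dist y y'))"

definition sublinear_expectation_space :: "('w \<Rightarrow> real) set \<Rightarrow> (('w \<Rightarrow> real) \<Rightarrow> real) \<Rightarrow> bool" where
  "sublinear_expectation_space H E \<longleftrightarrow>
     (\<forall>c. (\<lambda>_. c) \<in> H) \<and> (\<forall>X\<in>H. \<forall>Y\<in>H. (\<lambda>w. X w + Y w) \<in> H) \<and> (\<forall>X\<in>H. \<forall>c. (\<lambda>w. c * X w) \<in> H) \<and>
     (\<forall>n (X::nat \<Rightarrow> 'w \<Rightarrow> real) \<phi>. (\<forall>k<n. X k \<in> H) \<longrightarrow> bl_tuple n \<phi> \<longrightarrow> (\<lambda>w. \<phi> (\<lambda>k. X k w)) \<in> H) \<and>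
     (\<forall>X\<in>H. \<forall>Y\<in>H. (\<forall>w. X w \<le> Y w) \<longrightarrow> E X \<le> E Y) \<and>
     (\<forall>c. E (\<lambda>_. c) = c) \<and>
     (\<forall>X\<in>H. \<forall>Y\<in>H. E (\<lambda>w. X w + Y w) \<le> E X + E Y) \<and>
     (\<forall>X\<in>H. \<forall>c\<ge>0. E (\<lambda>w. c * X w) = c * E X)"

definition random_seq :: "('w \<Rightarrow> real) set \<Rightarrow> (nat \<Rightarrow> 'w \<Rightarrow> 'd::metric_space) \<Rightarrow> bool" where
  "random_seq H Z \<longleftrightarrow> (\<forall>n \<phi>. bl_tuple n \<phi> \<longrightarrow> (\<lambda>w. \<phi> (\<lambda>k. Z k w)) \<in> H)"

definition ident_distr :: "(('w \<Rightarrow> real) \<Rightarrow> real) \<Rightarrow> ('w \<Rightarrow> 'd::metric_space) \<Rightarrow> ('w \<Rightarrow> 'd) \<Rightarrow> bool" where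
  "ident_distr E X Y \<longleftrightarrow> (\<forall>\<phi>::'d \<Rightarrow> real. bl_fun \<phi> \<longrightarrow> E (\<lambda>w. \<phi> (X w)) = E (\<lambda>w. \<phi> (Y w)))"

definition indep_of_prefix :: "(('w \<Rightarrow> real) \<Rightarrow> real) \<Rightarrow> (nat \<Rightarrow> 'w \<Rightarrow> 'd::metric_space) \<Rightarrow> nat \<Rightarrow> bool" where
  "indep_of_prefix E Z i \<longleftrightarrow> (\<forall>\<phi>. bl_tuple2 (Suc i) \<phi> \<longrightarrow>
     E (\<lambda>w. \<phi> (\<lambda>k. Z k w) (Z (Suc i) w)) = E (\<lambda>w. E (\<lambda>v. \<phi> (\<lambda>k. Z k w) (Z (Suc i) v))))"

definition iid_seq :: "('w \<Rightarrow> real) set \<Rightarrow> (('w \<Rightarrow> real) \<Rightarrow> real) \<Rightarrow> (nat \<Rightarrow> 'w \<Rightarrow> 'd::metric_space) \<Rightarrow> bool" where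
  "iid_seq H E Z \<longleftrightarrow> random_seq H Z \<and> (\<forall>i. ident_distr E (Z (Suc i)) (Z i)) \<and> (\<forall>i. indep_of_prefix E Z i)"

text \<open>Extension of E to f(X) for nonnegative f (possibly outside H), as a supremum over
  bounded Lipschitz minorants.\<close>
definition ext_expect :: "(('w \<Rightarrow> real) \<Rightarrow> real) \<Rightarrow> ('a::metric_space \<Rightarrow> real) \<Rightarrow> ('w \<Rightarrow> 'a) \<Rightarrow> ereal" where
  "ext_expect E f X = (SUP \<phi>\<in>{\<phi>. bl_fun \<phi> \<and> (\<forall>x. 0 \<le> \<phi> x \<and> \<phi> x \<le> f x)}. ereal (E (\<lambda>w. \<phi> (X w))))"

definition Cb3 :: "('d::euclidean_space \<Rightarrow> real) \<Rightarrow> bool" where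
  "Cb3 \<phi> \<longleftrightarrow> (\<exists>D1 D2 D3 B.
     (\<forall>x. (\<phi> has_derivative D1 x) (at x)) \<and>
     (\<forall>x u. ((\<lambda>y. D1 y u) has_derivative D2 x u) (at x)) \<and>
     (\<forall>x u v. ((\<lambda>y. D2 y u v) has_derivative D3 x u v) (at x)) \<and>
     (\<forall>u v w. continuous_on UNIV (\<lambda>x. D3 x u v w)) \<and>
     (\<forall>x. \<bar>\<phi> x\<bar> \<le> B) \<and>
     (\<forall>x u. \<bar>D1 x u\<bar> \<le> B * norm u) \<and>
     (\<forall>x u v. \<bar>D2 x u v\<bar> \<le> B * norm u * norm v) \<and>
     (\<forall>x u v w. \<bar>D3 x u v w\<bar> \<le> B * norm u * norm v * norm w))"

definition jump_incr :: "real \<Rightarrow> ('d::euclidean_space \<Rightarrow> real) \<Rightarrow> 'd \<Rightarrow> 'd \<Rightarrow> real" where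
  "jump_incr \<alpha> \<phi> x y =
     (if \<alpha> = 1 then \<phi> (x + y) - \<phi> x - (if norm y \<le> 1 then frechet_derivative \<phi> (at x) y else 0)
      else \<phi> (x + y) - \<phi> x)"

definition sym_sphere_measure :: "'d::euclidean_space measure \<Rightarrow> bool" where
  "sym_sphere_measure \<mu> \<longleftrightarrow> sets \<mu> = sets (restrict_space borel (sphere 0 1)) \<and> finite_measure \<mu> \<and>
     (\<forall>A\<in>sets \<mu>. emeasure \<mu> (uminus ` A) = emeasure \<mu> A)"

text \<open>F_mu(B) = int_S mu(dz) int_0^infty 1_B(r z) r^(-1-alpha) dr.\<close>
definition levy_F :: "real \<Rightarrow> 'd::euclidean_space measure \<Rightarrow> 'd measure" where
  "levy_F \<alpha> \<mu> = distr (\<mu> \<Otimes>\<^sub>M density (restrict_space lborel {0<..}) (\<lambda>r. ennreal (r powr (-1 - \<alpha>))))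
                     borel (\<lambda>(z, r). r *\<^sub>R z)"

definition jump_set :: "real \<Rightarrow> real \<Rightarrow> real \<Rightarrow> 'd::euclidean_space measure set" where
  "jump_set \<alpha> \<Lambda>l \<Lambda>u = {levy_F \<alpha> \<mu> | \<mu>. sym_sphere_measure \<mu> \<and>
      \<Lambda>l < measure \<mu> (space \<mu>) \<and> measure \<mu> (space \<mu>) < \<Lambda>u}"

definition sup_gen :: "real \<Rightarrow> real \<Rightarrow> real \<Rightarrow> ('d::euclidean_space \<Rightarrow> real) \<Rightarrow> 'd \<Rightarrow> real" where
  "sup_gen \<alpha> \<Lambda>l \<Lambda>u \<phi> x = (SUP F\<in>jump_set \<alpha> \<Lambda>l \<Lambda>u. (LINT y|F. jump_incr \<alpha> \<phi> x y))"

end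

theory Submission
  imports Defs
begin

(* Lindeberg-type telescoping. Put h = s/n and c = h^(1/alpha). Independence and identical distribution
   give E[phi(x + c S_(k+1))] = E[(T phi)(x + c S_k)] for the one-step operator
   T phi(y) = E[phi(y + c Z_1)], and (A2) says T phi - phi = h G + O(h l(h)) uniformly, G being the
   supremum over the jump set. Hence each of the n steps moves the expectation by h G(x + c S_k) up to
   h l(h). Applying (A2) at a fixed time tau shows that G is bounded and continuous up to 2 l(tau), so
   G(x + c S_k) may be replaced by G(x): near x by this modulus, far from x by the moment bound (A1)
   through Markov's inequality. Summing the n steps leaves an error s (l(s/n) + eps(s)), and
   eps(s) -> 0 for tau = s^(1/(4 alpha)) and cutoff radius s^(1/(2 alpha)).
   Only (A2) for phi itself is used. *)

lemma bl_funI: "(\<And>y. \<bar>g y\<bar> \<le> B) \<Longrightarrow> L-lipschitz_on UNIV g \<Longrightarrow> bl_fun g"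
  unfolding bl_fun_def bounded_iff by auto

lemma bl_funE:
  assumes "bl_fun g"
  obtains B L where "\<And>y. \<bar>g y\<bar> \<le> B" and "L-lipschitz_on UNIV g"
  using assms that unfolding bl_fun_def bounded_iff by fastforce

lemma lipschitz_on_affine_le:
  fixes g :: "'a::real_normed_vector \<Rightarrow> real"
  assumes "L-lipschitz_on UNIV g"
  shows "\<bar>g (x + c *\<^sub>R u) - g (x + c *\<^sub>R v)\<bar> \<le> L * \<bar>c\<bar> * norm (u - v)"
proof -
  have "\<bar>g (x + c *\<^sub>R u) - g (x + c *\<^sub>R v)\<bar> \<le> L * norm ((x + c *\<^sub>R u) - (x + c *\<^sub>R v))"
    using lipschitz_on_normD[OF assms] by (metis UNIV_I real_norm_def)
  also have "norm ((x + c *\<^sub>R u) - (x + c *\<^sub>R v)) = \<bar>c\<bar> * norm (u - v)"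
    by (simp flip: scaleR_diff_right)
  finally show ?thesis
    by (simp add: mult.assoc)
qed

lemma bl_fun_affine:
  fixes g :: "'a::real_normed_vector \<Rightarrow> real"
  assumes "bl_fun g"
  shows "bl_fun (\<lambda>z. g (y + c *\<^sub>R z))"
proof -
  obtain B L where "\<And>v. \<bar>g v\<bar> \<le> B" and L: "L-lipschitz_on UNIV g"
    using bl_funE[OF assms] by blast
  moreover have "(L * \<bar>c\<bar>)-lipschitz_on UNIV (\<lambda>z. g (y + c *\<^sub>R z))"
    using lipschitz_on_affine_le[OF L] lipschitz_on_nonneg[OF L]
    by (intro lipschitz_onI) (auto simp: dist_real_def dist_norm)
  ultimately show ?thesis
    by (intro bl_funI)
qed

lemma bl_tuple_sum:
  fixes g :: "'a::real_normed_vector \<Rightarrow> real"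
  assumes "bl_fun g"
  shows "bl_tuple k (\<lambda>z. g (x + c *\<^sub>R (\<Sum>i<k. z i)))"
proof -
  obtain B L where B: "\<And>y. \<bar>g y\<bar> \<le> B" and L: "L-lipschitz_on UNIV g"
    using bl_funE[OF assms] by blast
  have "\<bar>g (x + c *\<^sub>R (\<Sum>i<k. z i)) - g (x + c *\<^sub>R (\<Sum>i<k. z' i))\<bar>
      \<le> (L * \<bar>c\<bar>) * (\<Sum>i<k. dist (z i) (z' i))" for z z' :: "nat \<Rightarrow> 'a"
  proof -
    have "norm ((\<Sum>i<k. z i) - (\<Sum>i<k. z' i)) \<le> (\<Sum>i<k. dist (z i) (z' i))"
      using norm_sum[of "\<lambda>i. z i - z' i" "{..<k}"] by (simp add: dist_norm sum_subtractf)
    then show ?thesis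
      using lipschitz_on_affine_le[OF L] lipschitz_on_nonneg[OF L]
      by (meson abs_ge_zero mult_left_mono order_trans zero_le_mult_iff)
  qed
  then show ?thesis
    unfolding bl_tuple_def bounded_iff using B by auto
qed

lemma bl_tuple2_sum:
  fixes g :: "'a::real_normed_vector \<Rightarrow> real"
  assumes "bl_fun g"
  shows "bl_tuple2 k (\<lambda>z y. g (x + c *\<^sub>R (\<Sum>i<k. z i) + c *\<^sub>R y))"
proof -
  obtain B L where B: "\<And>y. \<bar>g y\<bar> \<le> B" and L: "L-lipschitz_on UNIV g"
    using bl_funE[OF assms] by blast
  have "\<bar>g (x + c *\<^sub>R (\<Sum>i<k. z i) + c *\<^sub>R y) - g (x + c *\<^sub>R (\<Sum>i<k. z' i) + c *\<^sub>R y')\<bar>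
      \<le> (L * \<bar>c\<bar>) * ((\<Sum>i<k. dist (z i) (z' i)) + dist y y')" for z z' :: "nat \<Rightarrow> 'a" and y y'
  proof -
    have "norm (((\<Sum>i<k. z i) + y) - ((\<Sum>i<k. z' i) + y'))
        \<le> norm ((\<Sum>i<k. z i) - (\<Sum>i<k. z' i)) + norm (y - y')"
      by (rule order_trans[OF _ norm_triangle_ineq]) (simp add: algebra_simps)
    also have "norm ((\<Sum>i<k. z i) - (\<Sum>i<k. z' i)) \<le> (\<Sum>i<k. dist (z i) (z' i))"
      using norm_sum[of "\<lambda>i. z i - z' i" "{..<k}"] by (simp add: dist_norm sum_subtractf)
    finally have "norm (((\<Sum>i<k. z i) + y) - ((\<Sum>i<k. z' i) + y'))
        \<le> (\<Sum>i<k. dist (z i) (z' i)) + dist y y'"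
      by (simp add: dist_norm)
    then show ?thesis
      using lipschitz_on_affine_le[OF L, of x c "(\<Sum>i<k. z i) + y" "(\<Sum>i<k. z' i) + y'"]
        lipschitz_on_nonneg[OF L]
      by (simp add: scaleR_right_distrib add.assoc)
        (meson abs_ge_zero mult_left_mono order_trans zero_le_mult_iff)
  qed
  then show ?thesis
    unfolding bl_tuple2_def bounded_iff using B by (intro conjI exI[of _ B] exI[of _ "L * \<bar>c\<bar>"]) auto
qed

lemma Cb3_bounded_lipschitz:
  assumes "Cb3 \<phi>"
  obtains B where "\<And>y. \<bar>\<phi> y\<bar> \<le> B" and "B-lipschitz_on UNIV \<phi>"
proof -
  obtain D B where D: "\<And>x. (\<phi> has_derivative D x) (at x)" and bounded: "\<And>x. \<bar>\<phi> x\<bar> \<le> B"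
    and D_bounded: "\<And>x u. \<bar>D x u\<bar> \<le> B * norm u"
    using assms unfolding Cb3_def by metis
  have "B-lipschitz_on UNIV \<phi>"
    using D D_bounded order_trans[OF abs_ge_zero bounded]
    by (intro bounded_derivative_imp_lipschitz onorm_le) auto
  with bounded show ?thesis
    by (rule that)
qed

definition tail_cutoff :: "real \<Rightarrow> 'a::real_normed_vector \<Rightarrow> real" where
  "tail_cutoff r z = min 1 (max 0 (norm z / r - 1))"

lemma tail_cutoff_nonneg: "0 \<le> tail_cutoff r z"
  and tail_cutoff_le_one: "tail_cutoff r z \<le> 1"
  and abs_tail_cutoff_le_one: "\<bar>tail_cutoff r z\<bar> \<le> 1"
  and tail_cutoff_zero [simp]: "tail_cutoff r 0 = 0"
  unfolding tail_cutoff_def by auto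

lemma tail_cutoff_eq_one: "0 < r \<Longrightarrow> 2 * r \<le> norm z \<Longrightarrow> tail_cutoff r z = 1"
  unfolding tail_cutoff_def by (simp add: le_divide_eq)

lemma tail_cutoff_scaleR: "0 < t \<Longrightarrow> tail_cutoff r (t *\<^sub>R z) = tail_cutoff (r / t) z"
  unfolding tail_cutoff_def by (simp add: mult.commute)

lemma lipschitz_on_tail_cutoff:
  assumes "0 < r"
  shows "(1 / r)-lipschitz_on UNIV (tail_cutoff r)"
proof (rule lipschitz_onI)
  fix a b :: 'a
  have "\<bar>norm a / r - norm b / r\<bar> \<le> 1 / r * norm (a - b)"
    using norm_triangle_ineq3[of a b] assms
    by (simp add: abs_div divide_right_mono flip: diff_divide_distrib)
  then show "dist (tail_cutoff r a) (tail_cutoff r b) \<le> 1 / r * dist a b"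
    unfolding tail_cutoff_def dist_real_def dist_norm by linarith
qed (use assms in simp)

lemma bl_fun_tail_cutoff: "0 < r \<Longrightarrow> bl_fun (tail_cutoff r)"
  by (intro bl_funI[OF abs_tail_cutoff_le_one lipschitz_on_tail_cutoff])

lemma tail_cutoff_le_powr:
  assumes r: "0 < r" and \<delta>: "0 < \<delta>"
  shows "r powr \<delta> * tail_cutoff r z \<le> norm z powr \<delta>"
proof (cases "r < norm z")
  case True
  then have "r powr \<delta> \<le> norm z powr \<delta>"
    using r \<delta> by (simp add: powr_mono2)
  then show ?thesis
    using tail_cutoff_le_one[of r z] r
    by (meson order_trans mult_left_le powr_ge_zero tail_cutoff_nonneg)
next
  case False
  then have "tail_cutoff r z = 0"
    using r unfolding tail_cutoff_def by (simp add: divide_le_eq)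
  then show ?thesis
    by simp
qed

lemma telescoping_abs_le:
  fixes a :: "nat \<Rightarrow> real"
  assumes "\<And>k. k < n \<Longrightarrow> \<bar>a (Suc k) - a k - d\<bar> \<le> e"
  shows "\<bar>a n - a 0 - real n * d\<bar> \<le> real n * e"
  using assms
proof (induction n)
  case (Suc n)
  then have "\<bar>a n - a 0 - real n * d\<bar> \<le> real n * e" and "\<bar>a (Suc n) - a n - d\<bar> \<le> e"
    by simp_all
  then show ?case
    by (simp add: algebra_simps abs_le_iff)
qed simp

lemma SUP_less_PInf_imp_bounded:
  fixes f :: "'a \<Rightarrow> ereal"
  assumes "(SUP i\<in>A. f i) < \<infinity>"
  obtains M where "\<And>i. i \<in> A \<Longrightarrow> f i \<le> ereal M"
proof -
  obtain M where "(SUP i\<in>A. f i) \<le> ereal M"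
    using assms by (cases "SUP i\<in>A. f i") auto
  then show ?thesis
    using that by (meson SUP_upper order_trans)
qed

lemma filterlim_powr_at_right_0:
  assumes "0 < p"
  shows "filterlim (\<lambda>s::real. s powr p) (at_right 0) (at_right 0)"
  unfolding filterlim_at
proof
  show "\<forall>\<^sub>F s in at_right 0. s powr p \<in> {0<..} \<and> s powr p \<noteq> 0"
    by (auto intro: eventually_mono[OF eventually_at_right_less])
  show "((\<lambda>s. s powr p) \<longlongrightarrow> 0) (at_right 0)"
    using assms by (intro tendsto_zero_powrI tendsto_ident_at tendsto_const)
      (auto intro: eventually_mono[OF eventually_at_right_less])
qed

lemma ext_expect_ge:
  assumes "bl_fun f" and "\<And>x. 0 \<le> f x" and "\<And>x. f x \<le> g x"
  shows "ereal (E (\<lambda>w. f (X w))) \<le> ext_expect E g X"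
  unfolding ext_expect_def by (rule SUP_upper) (use assms in auto)

locale sublinear_expectation =
  fixes H :: "('w \<Rightarrow> real) set" and E :: "('w \<Rightarrow> real) \<Rightarrow> real"
  assumes sublinear: "sublinear_expectation_space H E"
begin

lemma H_const: "(\<lambda>_. c) \<in> H"
  using sublinear unfolding sublinear_expectation_space_def by blast

lemma H_add: "X \<in> H \<Longrightarrow> Y \<in> H \<Longrightarrow> (\<lambda>w. X w + Y w) \<in> H"
  using sublinear unfolding sublinear_expectation_space_def by blast

lemma H_scale: "X \<in> H \<Longrightarrow> (\<lambda>w. c * X w) \<in> H"
  using sublinear unfolding sublinear_expectation_space_def by blast

lemma E_mono: "X \<in> H \<Longrightarrow> Y \<in> H \<Longrightarrow> (\<And>w. X w \<le> Y w) \<Longrightarrow> E X \<le> E Y"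
  using sublinear unfolding sublinear_expectation_space_def by blast

lemma E_const [simp]: "E (\<lambda>_. c) = c"
  using sublinear unfolding sublinear_expectation_space_def by blast

lemma E_add_le: "X \<in> H \<Longrightarrow> Y \<in> H \<Longrightarrow> E (\<lambda>w. X w + Y w) \<le> E X + E Y"
  using sublinear unfolding sublinear_expectation_space_def by blast

lemma E_scale: "X \<in> H \<Longrightarrow> 0 \<le> c \<Longrightarrow> E (\<lambda>w. c * X w) = c * E X"
  using sublinear unfolding sublinear_expectation_space_def by blast

lemma H_add_const: "X \<in> H \<Longrightarrow> (\<lambda>w. X w + c) \<in> H"
  using H_add[OF _ H_const] .

lemma E_add_const:
  assumes X: "X \<in> H"
  shows "E (\<lambda>w. X w + c) = E X + c"
proof (rule antisym)
  show "E (\<lambda>w. X w + c) \<le> E X + c"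
    using E_add_le[OF X H_const] by simp
  have "E X = E (\<lambda>w. (X w + c) + (- c))"
    by simp
  also have "\<dots> \<le> E (\<lambda>w. X w + c) + E (\<lambda>_. - c)"
    using E_add_le[OF H_add_const[OF X] H_const] .
  finally show "E X + c \<le> E (\<lambda>w. X w + c)"
    by simp
qed

lemma E_diff_le:
  assumes X: "X \<in> H" and Y: "Y \<in> H" and close: "\<And>w. \<bar>X w - Y w\<bar> \<le> e"
  shows "\<bar>E X - E Y\<bar> \<le> e"
proof -
  have "X w \<le> Y w + e" and "Y w \<le> X w + e" for w
    using close[of w] by auto
  then have "E X \<le> E (\<lambda>w. Y w + e)" and "E Y \<le> E (\<lambda>w. X w + e)"
    by (auto intro!: E_mono X Y H_add_const)
  then show ?thesis
    using E_add_const[OF X] E_add_const[OF Y] by (simp add: abs_le_iff)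
qed

lemma E_add_approx:
  assumes X: "X \<in> H" and D: "D \<in> H" and R: "R \<in> H" and close: "\<And>w. \<bar>D w - a\<bar> \<le> R w"
  shows "\<bar>E (\<lambda>w. X w + D w) - E X - a\<bar> \<le> E R"
proof -
  have D_upper: "D w \<le> R w + a" and D_lower: "a \<le> D w + R w" for w
    using close[of w] by auto
  have XD: "(\<lambda>w. X w + D w) \<in> H" and XR: "(\<lambda>w. X w + R w) \<in> H"
    using H_add X D R by auto
  have "E (\<lambda>w. X w + D w) \<le> E (\<lambda>w. (X w + R w) + a)"
    by (rule E_mono[OF XD H_add_const[OF XR]]) (simp add: D_upper)
  also have "\<dots> \<le> E X + E R + a"
    using E_add_const[OF XR] E_add_le[OF X R] by simp
  finally have upper: "E (\<lambda>w. X w + D w) \<le> E X + E R + a" .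
  have "E X \<le> E (\<lambda>w. (X w + D w) + (R w + (- a)))"
    by (rule E_mono[OF X H_add[OF XD H_add_const[OF R]]]) (use D_lower in \<open>smt (verit)\<close>)
  also have "\<dots> \<le> E (\<lambda>w. X w + D w) + E R - a"
    using E_add_le[OF XD H_add_const[OF R, of "- a"]] E_add_const[OF R, of "- a"] by linarith
  finally show ?thesis
    using upper by (simp add: abs_le_iff)
qed

lemma ext_expect_nonneg:
  assumes "\<And>x. 0 \<le> g x"
  shows "0 \<le> ext_expect E g X"
proof -
  have "ereal (E (\<lambda>w. 0)) \<le> ext_expect E g X"
    using assms by (intro ext_expect_ge[of "\<lambda>_. 0"] bl_funI[of _ 0 0] lipschitz_on_constant) auto
  then show ?thesis
    by (simp add: zero_ereal_def)
qed

text \<open>Markov's inequality, with the Lipschitz cutoff in place of the indicator of \<open>|z| > r\<close>.\<close>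
lemma E_tail_cutoff_le_moment:
  assumes H: "(\<lambda>w. tail_cutoff r (X w)) \<in> H"
    and moment: "ext_expect E (\<lambda>y. norm y powr \<delta>) X \<le> ereal M"
    and r: "0 < r" and \<delta>: "0 < \<delta>"
  shows "E (\<lambda>w. tail_cutoff r (X w)) \<le> M / r powr \<delta>"
proof -
  have "bl_fun (\<lambda>z. r powr \<delta> * tail_cutoff r z)"
    using abs_tail_cutoff_le_one r
    by (intro bl_funI[of _ "r powr \<delta>" "r powr \<delta> * (1 / r)"] lipschitz_on_cmult_real_nonneg lipschitz_on_tail_cutoff)
      (auto simp: abs_mult mult_left_le)
  then have "ereal (E (\<lambda>w. r powr \<delta> * tail_cutoff r (X w))) \<le> ext_expect E (\<lambda>y. norm y powr \<delta>) X"
    using tail_cutoff_le_powr[OF r \<delta>] by (intro ext_expect_ge) (simp_all add: tail_cutoff_nonneg)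
  then have "ereal (E (\<lambda>w. r powr \<delta> * tail_cutoff r (X w))) \<le> ereal M"
    using moment by (rule order.trans)
  then have "r powr \<delta> * E (\<lambda>w. tail_cutoff r (X w)) \<le> M"
    using E_scale[OF H, of "r powr \<delta>"] by simp
  then show ?thesis
    using r by (simp add: le_divide_eq mult.commute)
qed

end

locale iid_sequence = sublinear_expectation H E
  for H :: "('w \<Rightarrow> real) set" and E +
  fixes Z :: "nat \<Rightarrow> 'w \<Rightarrow> 'd::real_normed_vector"
  assumes iid: "iid_seq H E Z"
begin

lemma ident_distr_Z0: "ident_distr E (Z k) (Z 0)"
proof (induction k)
  case (Suc k)
  moreover have "ident_distr E (Z (Suc k)) (Z k)"
    using iid unfolding iid_seq_def by blast
  ultimately show ?case
    unfolding ident_distr_def by simp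
qed (simp add: ident_distr_def)

lemma partial_sum_in_H: "bl_fun g \<Longrightarrow> (\<lambda>w. g (x + c *\<^sub>R (\<Sum>i<k. Z i w))) \<in> H"
  using iid bl_tuple_sum unfolding iid_seq_def random_seq_def by blast

lemma Z0_in_H: "bl_fun g \<Longrightarrow> (\<lambda>w. g (x + c *\<^sub>R Z 0 w)) \<in> H"
  using partial_sum_in_H[of g x c 1] by simp

definition transition :: "real \<Rightarrow> ('d \<Rightarrow> real) \<Rightarrow> 'd \<Rightarrow> real" where
  "transition c g y = E (\<lambda>v. g (y + c *\<^sub>R Z 0 v))"

lemma E_increment_eq: "bl_fun g \<Longrightarrow> E (\<lambda>w. g (y + c *\<^sub>R Z 0 w) - g y) = transition c g y - g y"
  using E_add_const[OF Z0_in_H, of g y c "- g y"] by (simp add: transition_def)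

lemma abs_transition_le:
  assumes "bl_fun g" and "\<And>y. \<bar>g y\<bar> \<le> B"
  shows "\<bar>transition c g y\<bar> \<le> B"
proof -
  have "\<bar>E (\<lambda>v. g (y + c *\<^sub>R Z 0 v)) - E (\<lambda>_. 0)\<bar> \<le> B"
    by (rule E_diff_le[OF Z0_in_H[OF assms(1)] H_const]) (simp add: assms(2))
  then show ?thesis
    by (simp add: transition_def)
qed

lemma lipschitz_on_transition:
  assumes g: "bl_fun g" and L: "L-lipschitz_on UNIV g"
  shows "L-lipschitz_on UNIV (transition c g)"
proof (rule lipschitz_onI)
  fix y y' :: 'd
  have "\<bar>g (y + c *\<^sub>R Z 0 w) - g (y' + c *\<^sub>R Z 0 w)\<bar> \<le> L * dist y y'" for w
    using lipschitz_onD[OF L, of "y + c *\<^sub>R Z 0 w" "y' + c *\<^sub>R Z 0 w"]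
    by (simp add: dist_real_def)
  then show "dist (transition c g y) (transition c g y') \<le> L * dist y y'"
    unfolding transition_def dist_real_def by (intro E_diff_le Z0_in_H g)
qed (rule lipschitz_on_nonneg[OF L])

lemma bl_fun_transition: "bl_fun g \<Longrightarrow> bl_fun (transition c g)"
  by (metis abs_transition_le bl_funE bl_funI lipschitz_on_transition)

text \<open>Independence of \<open>Z k\<close> from its predecessors together with \<open>Z k \<sim> Z 0\<close>.\<close>
lemma E_partial_sum_Suc:
  assumes g: "bl_fun g"
  shows "E (\<lambda>w. g (x + c *\<^sub>R (\<Sum>i<Suc k. Z i w)))
    = E (\<lambda>w. transition c g (x + c *\<^sub>R (\<Sum>i<k. Z i w)))"
proof (cases k)
  case 0
  then show ?thesis
    by (simp add: transition_def)
next
  case (Suc i)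
  have "indep_of_prefix E Z i"
    using iid unfolding iid_seq_def by blast
  then have "E (\<lambda>w. g (x + c *\<^sub>R (\<Sum>j<k. Z j w) + c *\<^sub>R Z k w))
      = E (\<lambda>w. E (\<lambda>v. g (x + c *\<^sub>R (\<Sum>j<k. Z j w) + c *\<^sub>R Z k v)))"
    using bl_tuple2_sum[OF g, of k x c] unfolding indep_of_prefix_def Suc by blast
  moreover have "E (\<lambda>v. g (x + c *\<^sub>R (\<Sum>j<k. Z j w) + c *\<^sub>R Z k v))
      = transition c g (x + c *\<^sub>R (\<Sum>j<k. Z j w))" for w
    using ident_distr_Z0[of k] bl_fun_affine[OF g, of "x + c *\<^sub>R (\<Sum>j<k. Z j w)" c]
    unfolding ident_distr_def transition_def by blast
  ultimately show ?thesis
    by (simp add: scaleR_right_distrib add.assoc)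
qed

end

locale stable_clt_setting = iid_sequence H E Z
  for H :: "('w \<Rightarrow> real) set" and E and Z :: "nat \<Rightarrow> 'w \<Rightarrow> 'd::real_normed_vector" +
  fixes \<alpha> \<delta> M B :: real and \<phi> G :: "'d \<Rightarrow> real" and l :: "real \<Rightarrow> real"
  assumes alpha_pos: "0 < \<alpha>" and delta_pos: "0 < \<delta>"
    and moment_bound: "\<And>n. 1 \<le> n \<Longrightarrow>
      ext_expect E (\<lambda>y. norm y powr \<delta>) (\<lambda>w. real n powr (-1 / \<alpha>) *\<^sub>R (\<Sum>i<n. Z i w)) \<le> ereal M"
    and phi_bounded: "\<And>y. \<bar>\<phi> y\<bar> \<le> B" and phi_lipschitz: "B-lipschitz_on UNIV \<phi>"
    and generator_approx: "\<And>h y. 0 < h \<Longrightarrow> h \<le> 1 \<Longrightarrow>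
      \<bar>transition (h powr (1 / \<alpha>)) \<phi> y - \<phi> y - h * G y\<bar> \<le> h * l h"
    and l_tendsto: "(l \<longlongrightarrow> 0) (at_right 0)"
begin

lemma bl_fun_phi: "bl_fun \<phi>"
  using phi_bounded phi_lipschitz by (rule bl_funI)

lemma B_nonneg: "0 \<le> B"
  using lipschitz_on_nonneg[OF phi_lipschitz] .

lemma M_nonneg: "0 \<le> M"
proof -
  have "0 \<le> ext_expect E (\<lambda>y. norm y powr \<delta>) (\<lambda>w. real 1 powr (-1 / \<alpha>) *\<^sub>R (\<Sum>i<1. Z i w))"
    by (rule ext_expect_nonneg) simp
  also have "\<dots> \<le> ereal M"
    by (rule moment_bound) simp
  finally show ?thesis
    by simp
qed

lemma l_nonneg: "0 < h \<Longrightarrow> h \<le> 1 \<Longrightarrow> 0 \<le> l h"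
  using generator_approx[of h 0] by (smt (verit) zero_le_mult_iff)

lemma abs_G_le: "\<bar>G y\<bar> \<le> 2 * B + l 1"
  using generator_approx[of 1 y] abs_transition_le[OF bl_fun_phi phi_bounded, of 1 y] phi_bounded[of y]
  by simp

text \<open>Comparing \<open>G\<close> at two points through the generator approximation at a fixed time \<open>\<tau>\<close>.\<close>
lemma G_diff_le:
  assumes \<tau>: "0 < \<tau>" "\<tau> \<le> 1"
  shows "\<bar>G y - G y'\<bar> \<le> 2 * B * norm (y - y') / \<tau> + 2 * l \<tau>"
proof -
  let ?T = "transition (\<tau> powr (1 / \<alpha>)) \<phi>"
  have "\<bar>?T y - ?T y'\<bar> \<le> B * norm (y - y')" and "\<bar>\<phi> y - \<phi> y'\<bar> \<le> B * norm (y - y')"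
    using lipschitz_onD[OF lipschitz_on_transition[OF bl_fun_phi phi_lipschitz]]
      lipschitz_onD[OF phi_lipschitz] by (auto simp: dist_real_def dist_norm)
  then have "\<bar>\<tau> * G y - \<tau> * G y'\<bar> \<le> 2 * B * norm (y - y') + 2 * \<tau> * l \<tau>"
    using generator_approx[OF \<tau>, of y] generator_approx[OF \<tau>, of y'] by (simp add: abs_le_iff)
  then have "\<tau> * \<bar>G y - G y'\<bar> \<le> 2 * B * norm (y - y') + 2 * \<tau> * l \<tau>"
    using \<tau> by (simp add: abs_mult flip: right_diff_distrib)
  then show ?thesis
    using \<tau> by (simp add: field_simps)
qed

text \<open>Near \<open>x\<close> the increment is small by \<open>G_diff_le\<close>; far from \<open>x\<close> it is bounded and the cutoff equals one.\<close>
lemma G_increment_le: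
  assumes \<tau>: "0 < \<tau>" "\<tau> \<le> 1" and r: "0 < r"
  shows "\<bar>G (x + z) - G x\<bar> \<le> 2 * l \<tau> + 4 * B * r / \<tau> + 2 * (2 * B + l 1) * tail_cutoff r z"
proof (cases "norm z \<le> 2 * r")
  case True
  have "2 * B * norm z / \<tau> \<le> 4 * B * r / \<tau>"
    using mult_left_mono[OF True B_nonneg] \<tau> by (simp add: divide_right_mono)
  moreover have "0 \<le> (2 * B + l 1) * tail_cutoff r z"
    using B_nonneg l_nonneg[of 1] by (simp add: tail_cutoff_nonneg)
  moreover have "\<bar>G (x + z) - G x\<bar> \<le> 2 * B * norm z / \<tau> + 2 * l \<tau>"
    using G_diff_le[OF \<tau>, of "x + z" x] by simp
  ultimately show ?thesis
    by linarith
next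
  case False
  then have "tail_cutoff r z = 1"
    by (intro tail_cutoff_eq_one[OF r]) simp
  moreover have "0 \<le> 4 * B * r / \<tau>"
    using B_nonneg r \<tau> by simp
  ultimately show ?thesis
    using abs_G_le[of "x + z"] abs_G_le[of x] l_nonneg[OF \<tau>] abs_triangle_ineq4[of "G (x + z)" "G x"]
    by simp
qed

lemma E_tail_cutoff_partial_sum_le:
  assumes s: "0 < s" and n: "1 \<le> n" "k \<le> n" and r: "0 < r"
  shows "E (\<lambda>w. tail_cutoff r ((s / real n) powr (1 / \<alpha>) *\<^sub>R (\<Sum>i<k. Z i w)))
    \<le> M * (s powr (1 / \<alpha>) / r) powr \<delta>"
proof (cases "k = 0")
  case True
  then show ?thesis
    using M_nonneg by simp
next
  case False
  define t where "t = (s / real n * real k) powr (1 / \<alpha>)"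
  have t: "0 < t"
    unfolding t_def using s n False by simp
  have "t * real k powr (-1 / \<alpha>) = (s / real n) powr (1 / \<alpha>) * (real k powr (1 / \<alpha>) * real k powr (-1 / \<alpha>))"
    unfolding t_def using s by (subst powr_mult) auto
  then have scale: "(s / real n) powr (1 / \<alpha>) = t * real k powr (-1 / \<alpha>)"
    using False by (simp flip: powr_add)
  have "E (\<lambda>w. tail_cutoff r ((s / real n) powr (1 / \<alpha>) *\<^sub>R (\<Sum>i<k. Z i w)))
      = E (\<lambda>w. tail_cutoff (r / t) (real k powr (-1 / \<alpha>) *\<^sub>R (\<Sum>i<k. Z i w)))"
    using tail_cutoff_scaleR[OF t, of r "real k powr (-1 / \<alpha>) *\<^sub>R (\<Sum>i<k. Z i w)" for w]
    by (simp add: scale)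
  also have "\<dots> \<le> M / (r / t) powr \<delta>"
    using partial_sum_in_H[OF bl_fun_tail_cutoff, of "r / t" 0 "real k powr (-1 / \<alpha>)" k]
      moment_bound[of k] False r t delta_pos
    by (intro E_tail_cutoff_le_moment) auto
  also have "\<dots> = M * (t / r) powr \<delta>"
    using r t by (simp add: powr_divide divide_divide_eq_left)
  also have "\<dots> \<le> M * (s powr (1 / \<alpha>) / r) powr \<delta>"
  proof -
    have "t \<le> s powr (1 / \<alpha>)"
      unfolding t_def using s n alpha_pos by (intro powr_mono2) (auto simp: field_simps)
    then show ?thesis
      using t r delta_pos M_nonneg by (intro mult_left_mono powr_mono2 divide_right_mono) auto
  qed
  finally show ?thesis .
qed

text \<open>Per unit time, the cost of replacing \<open>G (x + c S\<^sub>k)\<close> by \<open>G x\<close>: the modulus of \<open>G\<close> seen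
  at time \<open>\<tau>\<close>, its variation within radius \<open>2r\<close>, and the Markov bound for leaving that radius.\<close>
definition freeze_error :: "real \<Rightarrow> real \<Rightarrow> real \<Rightarrow> real" where
  "freeze_error s \<tau> r = 2 * l \<tau> + 4 * B * r / \<tau> + 2 * (2 * B + l 1) * M * (s powr (1 / \<alpha>) / r) powr \<delta>"

lemma transition_increment_le:
  assumes h: "0 < h" "h \<le> 1" and \<tau>: "0 < \<tau>" "\<tau> \<le> 1" and r: "0 < r"
  shows "\<bar>transition (h powr (1 / \<alpha>)) \<phi> (x + z) - \<phi> (x + z) - h * G x\<bar>
    \<le> h * (2 * (2 * B + l 1) * tail_cutoff r z + (l h + 2 * l \<tau> + 4 * B * r / \<tau>))"
proof -
  have "\<bar>h * G (x + z) - h * G x\<bar> \<le> h * (2 * l \<tau> + 4 * B * r / \<tau> + 2 * (2 * B + l 1) * tail_cutoff r z)"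
    using mult_left_mono[OF G_increment_le[OF \<tau> r, of x z], of h] h
    by (simp add: abs_mult flip: right_diff_distrib)
  then show ?thesis
    using generator_approx[OF h, of "x + z"] unfolding distrib_left by (simp only: abs_le_iff) linarith
qed

lemma partial_sum_step_le:
  assumes s: "0 < s" "s \<le> 1" and n: "1 \<le> n" "k < n" and \<tau>: "0 < \<tau>" "\<tau> \<le> 1" and r: "0 < r"
  defines "h \<equiv> s / real n"
  shows "\<bar>E (\<lambda>w. \<phi> (x + h powr (1 / \<alpha>) *\<^sub>R (\<Sum>i<Suc k. Z i w)))
      - E (\<lambda>w. \<phi> (x + h powr (1 / \<alpha>) *\<^sub>R (\<Sum>i<k. Z i w))) - h * G x\<bar>
    \<le> h * (l h + freeze_error s \<tau> r)"
proof -
  have h: "0 < h" "h \<le> 1"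
    unfolding h_def using s n by (auto simp: divide_le_eq)
  define c where "c = h powr (1 / \<alpha>)"
  define S where "S w = c *\<^sub>R (\<Sum>i<k. Z i w)" for w
  define T where "T = transition c \<phi>"
  define C where "C = l h + 2 * l \<tau> + 4 * B * r / \<tau>"
  define K where "K = 2 * B + l 1"
  have X: "(\<lambda>w. \<phi> (x + S w)) \<in> H" and TX: "(\<lambda>w. T (x + S w)) \<in> H"
    unfolding S_def T_def using partial_sum_in_H bl_fun_phi bl_fun_transition by auto
  have D: "(\<lambda>w. T (x + S w) - \<phi> (x + S w)) \<in> H"
    using H_add[OF TX H_scale[OF X, of "-1"]] by simp
  have tail: "(\<lambda>w. tail_cutoff r (S w)) \<in> H"
    using partial_sum_in_H[OF bl_fun_tail_cutoff[OF r], of 0 c k] unfolding S_def by simp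
  have R: "(\<lambda>w. h * (2 * K * tail_cutoff r (S w) + C)) \<in> H"
    by (intro H_scale H_add_const tail)
  have "\<bar>E (\<lambda>w. \<phi> (x + S w) + (T (x + S w) - \<phi> (x + S w))) - E (\<lambda>w. \<phi> (x + S w)) - h * G x\<bar>
      \<le> E (\<lambda>w. h * (2 * K * tail_cutoff r (S w) + C))"
    using transition_increment_le[OF h \<tau> r]
    by (intro E_add_approx[OF X D R]) (simp add: T_def c_def K_def C_def)
  also have "\<dots> = h * (2 * K * E (\<lambda>w. tail_cutoff r (S w)) + C)"
    using h K_def B_nonneg l_nonneg[of 1]
    by (simp add: E_scale E_add_const H_scale tail R H_add_const)
  also have "\<dots> \<le> h * (2 * K * (M * (s powr (1 / \<alpha>) / r) powr \<delta>) + C)"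
    using E_tail_cutoff_partial_sum_le[OF s(1) n(1) _ r, of k] n h B_nonneg l_nonneg[of 1]
    unfolding S_def c_def h_def K_def by (intro mult_left_mono add_right_mono) auto
  finally show ?thesis
    using E_partial_sum_Suc[OF bl_fun_phi, of x c k]
    unfolding S_def T_def c_def freeze_error_def C_def K_def by (simp add: algebra_simps)
qed

lemma E_partial_sum_error_le:
  assumes s: "0 < s" "s \<le> 1" and n: "1 \<le> n" and \<tau>: "0 < \<tau>" "\<tau> \<le> 1" and r: "0 < r"
  shows "\<bar>E (\<lambda>w. \<phi> (x + (s / real n) powr (1 / \<alpha>) *\<^sub>R (\<Sum>i<n. Z i w))) - \<phi> x - s * G x\<bar>
    \<le> s * (l (s / real n) + freeze_error s \<tau> r)"
proof -
  have "\<bar>E (\<lambda>w. \<phi> (x + (s / real n) powr (1 / \<alpha>) *\<^sub>R (\<Sum>i<n. Z i w)))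
      - E (\<lambda>w. \<phi> (x + (s / real n) powr (1 / \<alpha>) *\<^sub>R (\<Sum>i<0. Z i w))) - real n * (s / real n * G x)\<bar>
    \<le> real n * (s / real n * (l (s / real n) + freeze_error s \<tau> r))"
    by (rule telescoping_abs_le) (rule partial_sum_step_le[OF s n _ \<tau> r])
  then show ?thesis
    using n by simp
qed

lemma limsup_error_le:
  assumes s: "0 < s" "s \<le> 1" and \<tau>: "0 < \<tau>" "\<tau> \<le> 1" and r: "0 < r"
  shows "limsup (\<lambda>n. ereal \<bar>E (\<lambda>w. \<phi> (x + (s / real n) powr (1 / \<alpha>) *\<^sub>R (\<Sum>i<n. Z i w)))
      - \<phi> x - s * G x\<bar>) \<le> ereal (s * freeze_error s \<tau> r)"
proof -
  have "filterlim (\<lambda>n. s / real n) (at_right 0) sequentially"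
    unfolding filterlim_at using s
    by (auto intro!: lim_const_over_n eventually_sequentiallyI[of 1])
  then have "(\<lambda>n. l (s / real n)) \<longlonglongrightarrow> 0"
    by (rule filterlim_compose[OF l_tendsto])
  then have bound_lim: "(\<lambda>n. ereal (s * (l (s / real n) + freeze_error s \<tau> r)))
      \<longlonglongrightarrow> ereal (s * (0 + freeze_error s \<tau> r))"
    by (intro tendsto_intros)
  have "limsup (\<lambda>n. ereal \<bar>E (\<lambda>w. \<phi> (x + (s / real n) powr (1 / \<alpha>) *\<^sub>R (\<Sum>i<n. Z i w)))
      - \<phi> x - s * G x\<bar>) \<le> limsup (\<lambda>n. ereal (s * (l (s / real n) + freeze_error s \<tau> r)))"
    using E_partial_sum_error_le[OF s _ \<tau> r]
    by (intro Limsup_mono eventually_sequentiallyI[of 1]) simp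
  also have "\<dots> = ereal (s * freeze_error s \<tau> r)"
    using lim_imp_Limsup[OF _ bound_lim] by simp
  finally show ?thesis .
qed

text \<open>The choice \<open>\<tau> = s\<^sup>a\<close>, \<open>r = s\<^sup>2\<^sup>a\<close> with \<open>a = 1/(4\<alpha>)\<close> makes every term of
  \<open>freeze_error\<close> vanish as \<open>s \<rightarrow> 0\<close>: \<open>r/\<tau> = s\<^sup>a\<close> and \<open>s\<^sup>1\<^sup>/\<^sup>\<alpha>/r = s\<^sup>2\<^sup>a\<close>.\<close>
lemma error_little_o:
  "\<exists>\<rho>. ((\<lambda>s. \<rho> s / s) \<longlongrightarrow> 0) (at_right 0) \<and>
    (\<forall>s\<in>{0..1}. \<forall>x. limsup (\<lambda>n. ereal \<bar>E (\<lambda>w. \<phi> (x + (s / real n) powr (1 / \<alpha>) *\<^sub>R (\<Sum>i<n. Z i w)))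
      - \<phi> x - s * G x\<bar>) \<le> ereal (\<rho> s))"
proof (intro exI conjI ballI allI)
  define a where "a = 1 / (4 * \<alpha>)"
  have a: "0 < a"
    unfolding a_def using alpha_pos by simp
  define \<rho> where "\<rho> s = s * freeze_error s (s powr a) (s powr (2 * a))" for s
  have \<rho>_eq: "\<rho> s / s = 2 * l (s powr a) + 4 * B * s powr a + 2 * (2 * B + l 1) * M * (s powr (2 * a)) powr \<delta>"
    if "0 < s" for s
  proof -
    have "s powr (2 * a) / s powr a = s powr a" and "s powr (1 / \<alpha>) / s powr (2 * a) = s powr (2 * a)"
      using that alpha_pos by (simp_all add: a_def flip: powr_diff)
    moreover have "\<rho> s / s = 2 * l (s powr a) + 4 * B * (s powr (2 * a) / s powr a)
        + 2 * (2 * B + l 1) * M * (s powr (1 / \<alpha>) / s powr (2 * a)) powr \<delta>"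
      unfolding \<rho>_def freeze_error_def using that by simp
    ultimately show ?thesis
      by simp
  qed
  have "\<forall>\<^sub>F s in at_right 0. 2 * l (s powr a) + 4 * B * s powr a + 2 * (2 * B + l 1) * M * (s powr (2 * a)) powr \<delta>
      = \<rho> s / s"
    using eventually_at_right_less[of "0::real"] by eventually_elim (simp add: \<rho>_eq)
  moreover have "((\<lambda>s. 2 * l (s powr a) + 4 * B * s powr a + 2 * (2 * B + l 1) * M * (s powr (2 * a)) powr \<delta>)
      \<longlongrightarrow> 2 * 0 + 4 * B * 0 + 2 * (2 * B + l 1) * M * 0) (at_right 0)"
    using filterlim_compose[OF l_tendsto filterlim_powr_at_right_0[OF a]]
      filterlim_powr_at_right_0[OF a] filterlim_powr_at_right_0[of "2 * a * \<delta>"] a delta_pos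
    by (intro tendsto_intros) (auto simp: filterlim_at powr_powr)
  ultimately show "((\<lambda>s. \<rho> s / s) \<longlongrightarrow> 0) (at_right 0)"
    by (simp add: tendsto_cong)
  fix s :: real and x :: 'd
  assume "s \<in> {0..1}"
  then consider "s = 0" | "0 < s" "s \<le> 1"
    by (cases "s = 0") auto
  then show "limsup (\<lambda>n. ereal \<bar>E (\<lambda>w. \<phi> (x + (s / real n) powr (1 / \<alpha>) *\<^sub>R (\<Sum>i<n. Z i w)))
      - \<phi> x - s * G x\<bar>) \<le> ereal (\<rho> s)"
  proof cases
    case 1
    then show ?thesis
      by (simp add: \<rho>_def Limsup_const)
  next
    case 2
    then show ?thesis
      unfolding \<rho>_def using a by (intro limsup_error_le) (auto intro: powr_le1)
  qed
qed

end

theorem theorem4p4: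
  fixes H :: "('w \<Rightarrow> real) set" and E :: "('w \<Rightarrow> real) \<Rightarrow> real"
    and Z :: "nat \<Rightarrow> 'w \<Rightarrow> 'd::euclidean_space"
    and \<alpha> \<delta> \<Lambda>l \<Lambda>u :: real and \<phi> :: "'d \<Rightarrow> real"
  assumes alpha: "0 < \<alpha>" "\<alpha> \<le> 1"
    and Lambda: "0 < \<Lambda>l" "0 < \<Lambda>u"
    and space: "sublinear_expectation_space H E"
    and iid: "iid_seq H E Z"
    and infinite_mean: "\<forall>i. ext_expect E norm (Z i) = \<infinity>"
    and A1: "0 < \<delta>" "\<delta> < \<alpha>"
      "(SUP n\<in>{1..}. ext_expect E (\<lambda>y. norm y powr \<delta>)
          (\<lambda>w. real n powr (-1 / \<alpha>) *\<^sub>R (\<Sum>i<n. Z i w))) < \<infinity>"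
    and A2: "\<forall>\<psi>. Cb3 \<psi> \<longrightarrow> (\<exists>l::real \<Rightarrow> real. (l \<longlongrightarrow> 0) (at_right 0) \<and>
      (\<forall>s\<in>{0<..1}. \<forall>x. \<bar>E (\<lambda>w. \<psi> (x + s powr (1 / \<alpha>) *\<^sub>R Z 0 w) - \<psi> x)
                         - s * sup_gen \<alpha> \<Lambda>l \<Lambda>u \<psi> x\<bar> / s \<le> l s))"
    and phi: "Cb3 \<phi>"
  shows "\<exists>\<rho>::real \<Rightarrow> real. ((\<lambda>s. \<rho> s / s) \<longlongrightarrow> 0) (at_right 0) \<and>
    (\<forall>s\<in>{0..1}. \<forall>x. limsup (\<lambda>n. ereal \<bar>E (\<lambda>w. \<phi> (x + (s / real n) powr (1 / \<alpha>) *\<^sub>R (\<Sum>i<n. Z i w)))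
                                       - \<phi> x - s * sup_gen \<alpha> \<Lambda>l \<Lambda>u \<phi> x\<bar>) \<le> ereal (\<rho> s))"
proof -
  obtain B where \<phi>_bounded: "\<And>y. \<bar>\<phi> y\<bar> \<le> B" and \<phi>_lipschitz: "B-lipschitz_on UNIV \<phi>"
    using Cb3_bounded_lipschitz[OF phi] by blast
  obtain l where l_tendsto: "(l \<longlongrightarrow> 0) (at_right 0)"
    and approx: "\<And>s x. s \<in> {0<..1} \<Longrightarrow> \<bar>E (\<lambda>w. \<phi> (x + s powr (1 / \<alpha>) *\<^sub>R Z 0 w) - \<phi> x)
      - s * sup_gen \<alpha> \<Lambda>l \<Lambda>u \<phi> x\<bar> / s \<le> l s"
    using A2 phi by blast
  obtain M where moment: "\<And>n. n \<in> {1..} \<Longrightarrow>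
      ext_expect E (\<lambda>y. norm y powr \<delta>) (\<lambda>w. real n powr (-1 / \<alpha>) *\<^sub>R (\<Sum>i<n. Z i w)) \<le> ereal M"
    using SUP_less_PInf_imp_bounded[OF A1(3)] by blast
  interpret iid_sequence H E Z
    using space iid by unfold_locales
  interpret stable_clt_setting H E Z \<alpha> \<delta> M B \<phi> "sup_gen \<alpha> \<Lambda>l \<Lambda>u \<phi>" l
  proof unfold_locales
    fix h :: real and y :: 'd
    assume "0 < h" "h \<le> 1"
    then show "\<bar>transition (h powr (1 / \<alpha>)) \<phi> y - \<phi> y - h * sup_gen \<alpha> \<Lambda>l \<Lambda>u \<phi> y\<bar> \<le> h * l h"
      using approx[of h y] E_increment_eq[OF bl_funI[OF \<phi>_bounded \<phi>_lipschitz]]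
      by (simp add: divide_le_eq mult.commute)
  qed (use alpha A1 moment \<phi>_bounded \<phi>_lipschitz l_tendsto in auto)
  show ?thesis
    by (rule error_little_o)
qed

end
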